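(* For all integers $L,M\ge 0$, $$\sum_{i,j\in\mathbb Z}(-1)^{i}q^{(i+j)^2}\begin{bmatrix}2L\\ L-i\end{bmatrix}_{q^2}\begin{bmatrix}2M\\ M-j\end{bmatrix}_{q^2}=(-1)^M\frac{(q;q^2)_{L-M}}{(-q;q^2)_{L-M}}\,(q^2;q^4)_L\,(q^2;q^4)_M.$$
   Context: $q$ is complex with $|q|<1$. The $q$-shifted factorial is defined for all integers $n$ by $(a;q)_0=1$, $(a;q)_n=\prod_{j=0}^{n-1}(1-aq^j)$ for $n>0$, and $(a;q)_n=\prod_{j=1}^{-n}\frac{1}{1-aq^{-j}}$ for $n<0$; $(q)_n:=(q;q)_n$. The Gaussian binomial is $\begin{bmatrix}n+m\\ n\end{bmatrix}_q=\frac{(q)_{n+m}}{(q)_n(q)_m}$ if $n,m$ are nonnegative integers and $0$ otherwise (so the sum is finite). *)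

theory Defs
  imports "HOL-Analysis.Analysis"
begin

definition qpoch :: "complex \<Rightarrow> complex \<Rightarrow> int \<Rightarrow> complex" where
  "qpoch a q n =
     (if n \<ge> 0 then (\<Prod>j<nat n. 1 - a * q ^ j)
      else (\<Prod>j\<in>{1..nat (-n)}. 1 / (1 - a * q powi (- int j))))"

definition gauss_binom :: "complex \<Rightarrow> int \<Rightarrow> int \<Rightarrow> complex" where
  "gauss_binom q N K =
     (if 0 \<le> K \<and> 0 \<le> N - K
      then qpoch q q N / (qpoch q q K * qpoch q q (N - K)) else 0)"

end

theory Submission
  imports Defs "HOL-Computational_Algebra.Formal_Power_Series"
begin

(* Only finitely many terms are nonzero, so the left side is a finite double sum, here
   reindexed over k = L - i and l = M - j.  Replacing q by -q and exchanging the roles of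
   (L, i) and (M, j) leaves that sum invariant, so it suffices to treat L <= M.  Then the
   inner sum over l is a finite form of Jacobi's triple product, obtained from the
   q-binomial theorem, and it factors into two q-Pochhammer symbols sharing the prefix
   (-q;q^2)_{M-L}.  What remains is the alternating convolution
     sum_k (-1)^k [2L,k]_p (c;p)_k (c;p)_{2L-k} = (c^2;p^2)_L (p;p^2)_L,
   proved through a functional equation of the generating function of (c;p)_k/(p;p)_k. *)

definition poch :: "complex \<Rightarrow> complex \<Rightarrow> nat \<Rightarrow> complex" where
  "poch a p n = (\<Prod>j<n. 1 - a * p ^ j)"

definition qbinom :: "complex \<Rightarrow> nat \<Rightarrow> nat \<Rightarrow> complex" where
  "qbinom p n k = (if k \<le> n then poch p p n / (poch p p k * poch p p (n - k)) else 0)"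

lemma poch_0 [simp]: "poch a p 0 = 1"
  by (simp add: poch_def)

lemma poch_Suc: "poch a p (Suc n) = poch a p n * (1 - a * p ^ n)"
  by (simp add: poch_def)

lemma poch_add: "poch a p (m + n) = poch a p m * poch (a * p ^ m) p n"
  by (induction n) (simp_all add: poch_Suc power_add mult.assoc)

lemma poch_Suc_left: "poch a p (Suc n) = (1 - a) * poch (a * p) p n"
  using poch_add[of a p 1 n] by (simp add: poch_Suc)

(* (a^2;p^2)_n = (a;p)_n (-a;p)_n, pairing the factors 1 - a p^j and 1 + a p^j. *)
lemma poch_square: "poch (a\<^sup>2) (p\<^sup>2) n = poch a p n * poch (- a) p n"
  by (induction n) (simp_all add: poch_Suc power2_eq_square power_mult_distrib algebra_simps)

lemma factor_nonzero:
  fixes a p :: complex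
  assumes "norm a < 1" "norm p \<le> 1"
  shows "1 - a * p ^ j \<noteq> 0"
proof -
  have "norm (p ^ j) \<le> 1"
    unfolding norm_power using assms(2) by (intro power_le_one) simp_all
  then have "norm (a * p ^ j) \<le> norm a"
    unfolding norm_mult by (simp add: mult_left_le)
  then have "norm (a * p ^ j) \<noteq> norm (1::complex)"
    using assms(1) by simp
  then show ?thesis by auto
qed

lemma poch_nonzero:
  assumes "norm a < 1" "norm p \<le> 1"
  shows "poch a p n \<noteq> 0"
  unfolding poch_def prod_zero_iff[OF finite_lessThan] using factor_nonzero[OF assms] by blast

lemma qbinom_0 [simp]: "norm p < 1 \<Longrightarrow> qbinom p n 0 = 1"
  using poch_nonzero[of p p n] by (simp add: qbinom_def)

lemma qbinom_above [simp]: "n < k \<Longrightarrow> qbinom p n k = 0"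
  by (simp add: qbinom_def)

(* The q-Pascal recurrence; |p| < 1 keeps all denominators (p;p)_m nonzero. *)
lemma qbinom_pascal:
  assumes p: "norm p < 1"
  shows "qbinom p (Suc n) (Suc k) = qbinom p n k + p ^ Suc k * qbinom p n (Suc k)"
proof (cases "k < n")
  case True
  then obtain d where n: "n = k + Suc d" using less_imp_Suc_add by fastforce
  define x y where "x = p ^ Suc k" and "y = p ^ Suc d"
  have nz: "poch p p m \<noteq> 0" "1 - p ^ Suc m \<noteq> 0" for m
    using p poch_nonzero[of p p m] factor_nonzero[of p p m] by auto
  have "1 - x \<noteq> 0" "1 - y \<noteq> 0"
    unfolding x_def y_def by (fact nz(2))+
  have "poch p p (Suc n) = poch p p n * (1 - x * y)"
    by (simp add: poch_Suc x_def y_def n power_add)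
  moreover have "poch p p (Suc k) = poch p p k * (1 - x)" "poch p p (Suc d) = poch p p d * (1 - y)"
    by (simp_all add: poch_Suc x_def y_def)
  moreover have "Suc n - Suc k = Suc d" "n - k = Suc d" "n - Suc k = d" "Suc k \<le> n"
    by (simp_all add: n)
  ultimately have
    "qbinom p (Suc n) (Suc k) = poch p p n * (1 - x * y) / (poch p p k * (1 - x) * (poch p p d * (1 - y)))"
    "qbinom p n k = poch p p n / (poch p p k * (poch p p d * (1 - y)))"
    "qbinom p n (Suc k) = poch p p n / (poch p p k * (1 - x) * poch p p d)"
    by (simp_all add: qbinom_def del: diff_Suc_Suc)
  moreover have "poch p p n * (1 - x * y) / (poch p p k * (1 - x) * (poch p p d * (1 - y)))
      = poch p p n / (poch p p k * (poch p p d * (1 - y)))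
        + x * (poch p p n / (poch p p k * (1 - x) * poch p p d))"
    using nz(1) \<open>1 - x \<noteq> 0\<close> \<open>1 - y \<noteq> 0\<close> by (simp add: divide_simps) (simp add: algebra_simps)
  ultimately show ?thesis unfolding x_def[symmetric] by simp
next
  case False
  then show ?thesis
    using poch_nonzero[of p p] p by (cases "k = n") (simp_all add: qbinom_def)
qed

lemma q_binomial_theorem:
  assumes p: "norm p < 1"
  shows "poch x p n = (\<Sum>k\<le>n. qbinom p n k * ((-1) ^ k * p ^ (k choose 2) * x ^ k))"
proof (induction n arbitrary: x)
  case 0
  show ?case using p by (simp add: binomial_eq_0)
next
  case (Suc n)
  define s where "s y k = (-1) ^ k * p ^ (k choose 2) * y ^ k" for y k
  have s_scale: "s (x * p) k = p ^ k * s x k" for k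
    unfolding s_def power_mult_distrib by (simp add: mult_ac)
  have s_Suc: "s x (Suc k) = - x * s (x * p) k" for k
    unfolding s_scale by (simp add: s_def numeral_2_eq_2 power_add)
  define f where "f k = qbinom p n k * s (x * p) k" for k
  have shift: "(\<Sum>k\<le>n. f k) = s x 0 + (\<Sum>k\<le>n. p ^ Suc k * qbinom p n (Suc k) * s x (Suc k))"
    using sum.atMost_Suc_shift[of f n, unfolded f_def s_scale] p
    unfolding f_def s_scale by (simp add: mult_ac)
  have "poch x p (Suc n) = (1 - x) * (\<Sum>k\<le>n. f k)"
    by (simp add: poch_Suc_left Suc f_def s_def)
  also have "\<dots> = (\<Sum>k\<le>n. f k) + (\<Sum>k\<le>n. qbinom p n k * s x (Suc k))"
    unfolding s_Suc f_def by (simp add: left_diff_distrib sum_distrib_left sum_subtractf sum_negf mult_ac)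
  also have "\<dots> = s x 0 + (\<Sum>k\<le>n. qbinom p (Suc n) (Suc k) * s x (Suc k))"
    unfolding shift using p by (simp add: qbinom_pascal algebra_simps sum.distrib)
  also have "\<dots> = (\<Sum>k\<le>Suc n. qbinom p (Suc n) k * s x k)"
    unfolding sum.atMost_Suc_shift[of _ n] using p by simp
  finally show ?case by (simp add: s_def)
qed

(* Reversing the order of the factors of (-q^(1-2N);q^2)_N gives (-q;q^2)_N up to q^(-N^2). *)
lemma poch_inverted_odd:
  fixes q :: complex
  assumes "q \<noteq> 0"
  shows "q ^ (N\<^sup>2) * poch (- q / q ^ (2 * N)) (q\<^sup>2) N = poch (- q) (q\<^sup>2) N"
proof (induction N)
  case 0
  show ?case by simp
next
  case (Suc N)
  have shift: "(- q / q ^ (2 * Suc N)) * q\<^sup>2 = - q / q ^ (2 * N)"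
    using assms by (simp add: field_simps power_add power2_eq_square)
  have first: "(1 - (- q / q ^ (2 * Suc N))) * q ^ (2 * N + 1) = 1 + q ^ (2 * N + 1)"
    using assms by (simp add: field_simps power_add)
  have "Suc N ^ 2 = (2 * N + 1) + N\<^sup>2" by (simp add: power2_eq_square)
  then have "q ^ (Suc N ^ 2) = q ^ (2 * N + 1) * q ^ (N\<^sup>2)" by (metis power_add)
  then have "q ^ (Suc N ^ 2) * poch (- q / q ^ (2 * Suc N)) (q\<^sup>2) (Suc N)
      = (1 + q ^ (2 * N + 1)) * (q ^ (N\<^sup>2) * poch (- q / q ^ (2 * N)) (q\<^sup>2) N)"
    unfolding poch_Suc_left shift using first by (simp add: mult_ac)
  also have "\<dots> = poch (- q) (q\<^sup>2) (Suc N)"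
    unfolding Suc poch_Suc by (simp add: power_mult[symmetric] mult_ac)
  finally show ?case .
qed

(* Finite Jacobi triple product: the q-binomial theorem at x = -q^(1-2N), p = q^2. *)
lemma finite_jacobi_triple_product:
  fixes q :: complex
  assumes q: "norm q < 1" "q \<noteq> 0" and "N \<le> m"
  shows "(\<Sum>l\<le>m. qbinom (q\<^sup>2) m l * q ^ nat ((int N - int l)\<^sup>2))
       = poch (- q) (q\<^sup>2) N * poch (- q) (q\<^sup>2) (m - N)"
proof -
  define x where "x = - q / q ^ (2 * N)"
  have p: "norm (q\<^sup>2) < 1" using q(1) by (simp add: norm_power power_less_one_iff)
  have summand: "q ^ nat ((int N - int l)\<^sup>2) = q ^ (N\<^sup>2) * ((-1) ^ l * (q\<^sup>2) ^ (l choose 2) * x ^ l)" for l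
  proof -
    have "(-1) ^ l * x ^ l = ((-1) * x) ^ l" by (simp only: power_mult_distrib)
    also have "\<dots> = q ^ l / q ^ (2 * N * l)" by (simp add: x_def power_divide power_mult)
    also have "\<dots> = q powi (int l - int (2 * N * l))"
      unfolding power_int_diff[OF disjI1[OF q(2)]] power_int_of_nat ..
    finally have sign_part: "(-1) ^ l * x ^ l = q powi (int l - int (2 * N * l))" .
    have "2 * (l choose 2) = l * l - l" by (simp add: choose_two algebra_simps)
    then have "(q\<^sup>2) ^ (l choose 2) = q ^ (l * l - l)" by (simp flip: power_mult)
    moreover have "int (l * l - l) = int l * int l - int l" by (simp add: of_nat_diff)
    ultimately have binom_part: "(q\<^sup>2) ^ (l choose 2) = q powi (int l * int l - int l)"
      by (metis power_int_of_nat)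
    have exponent: "(int N - int l)\<^sup>2 = int (N\<^sup>2) + ((int l * int l - int l) + (int l - int (2 * N * l)))"
      by (simp add: power2_eq_square algebra_simps)
    have "q ^ nat ((int N - int l)\<^sup>2) = q powi ((int N - int l)\<^sup>2)"
      by (simp add: power_int_def)
    also have "\<dots> = q powi int (N\<^sup>2) * (q powi (int l * int l - int l) * q powi (int l - int (2 * N * l)))"
      unfolding exponent power_int_add[OF disjI1[OF q(2)]] ..
    also have "\<dots> = q ^ (N\<^sup>2) * ((q\<^sup>2) ^ (l choose 2) * ((-1) ^ l * x ^ l))"
      unfolding sign_part binom_part power_int_of_nat ..
    finally show ?thesis by (simp add: mult_ac)
  qed
  have "(\<Sum>l\<le>m. qbinom (q\<^sup>2) m l * q ^ nat ((int N - int l)\<^sup>2)) = q ^ (N\<^sup>2) * poch x (q\<^sup>2) m"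
    unfolding summand q_binomial_theorem[OF p] by (simp add: sum_distrib_left mult_ac)
  also have "poch x (q\<^sup>2) m = poch x (q\<^sup>2) N * poch (- q) (q\<^sup>2) (m - N)"
    using poch_add[of x "q\<^sup>2" N "m - N"] assms by (simp add: x_def power_mult)
  finally show ?thesis
    using poch_inverted_odd[OF q(2), of N] by (simp add: x_def mult_ac)
qed

(* With a_k = (c;p)_k/(p;p)_k, the series F_s(X) = sum_k s^k a_k X^k satisfies
   (1 - sX) F_s(X) = (1 - csX) F_s(pX).  Hence H = F_(-1) F_1 satisfies
   (1 - X^2) H(X) = (1 - c^2 X^2) H(pX), which yields a two-step recurrence for the
   coefficients h_n of H. *)
lemma alternating_convolution_recurrence:
  fixes p c :: complex
  assumes p: "norm p < 1"
  defines "a \<equiv> \<lambda>k. poch c p k / poch p p k"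
  defines "h \<equiv> \<lambda>n. \<Sum>i\<le>n. (-1) ^ i * a i * a (n - i)"
  shows "(1 - p ^ Suc (Suc n)) * h (Suc (Suc n)) = (1 - c\<^sup>2 * p ^ n) * h n"
proof -
  define F where "F s = Abs_fps (\<lambda>k. s ^ k * a k)" for s
  define dilate where "dilate G = fps_compose G (fps_const p * fps_X)" for G :: "complex fps"
  have dilate_nth: "fps_nth (dilate G) n = p ^ n * fps_nth G n" for G n
    by (simp add: dilate_def)
  have functional_eq: "(1 - fps_const s * fps_X) * F s = (1 - fps_const (c * s) * fps_X) * dilate (F s)" for s
  proof (rule fps_ext)
    fix n
    show "fps_nth ((1 - fps_const s * fps_X) * F s) n = fps_nth ((1 - fps_const (c * s) * fps_X) * dilate (F s)) n"
    proof (cases n)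
      case (Suc m)
      have "a (Suc m) * (1 - p ^ Suc m) = a m * (1 - c * p ^ m)"
        using poch_nonzero[of p p] factor_nonzero[of p p m] p by (simp add: a_def poch_Suc)
      then have "s ^ Suc m * (a (Suc m) * (1 - p ^ Suc m)) = s ^ Suc m * (a m * (1 - c * p ^ m))"
        by simp
      then show ?thesis
        by (simp add: Suc F_def dilate_nth algebra_simps)
    qed (simp add: F_def dilate_nth)
  qed
  have dilate_mult: "dilate (G * K) = dilate G * dilate K" for G K
    unfolding dilate_def by (simp add: fps_compose_mult_distrib)
  define H where "H = F (-1) * F 1"
  have minus_one: "fps_const (-1) = (-1 :: complex fps)"
    by (rule fps_ext) simp
  have "(1 - fps_X * fps_X) * H = ((1 - fps_const (-1) * fps_X) * F (-1)) * ((1 - fps_const 1 * fps_X) * F 1)"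
    by (simp add: H_def minus_one algebra_simps)
  also have "\<dots> = (1 - fps_const (c\<^sup>2) * fps_X * fps_X) * dilate H"
    unfolding functional_eq H_def dilate_mult
    by (simp add: algebra_simps power2_eq_square flip: fps_const_mult fps_const_neg)
  finally have "H - fps_X * (fps_X * H) = dilate H - fps_const (c\<^sup>2) * (fps_X * (fps_X * dilate H))"
    by (simp add: algebra_simps)
  then have "fps_nth (H - fps_X * (fps_X * H)) (Suc (Suc n))
      = fps_nth (dilate H - fps_const (c\<^sup>2) * (fps_X * (fps_X * dilate H))) (Suc (Suc n))"
    by (rule arg_cong)
  moreover have "fps_nth H n = h n" for n
    unfolding H_def fps_mult_nth by (simp add: F_def h_def atMost_atLeast0 mult_ac)
  ultimately show ?thesis
    by (simp add: dilate_nth algebra_simps)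
qed

(* The alternating convolution of (c;p)_k with itself against [2K,k]_p: iterating the
   recurrence above from h_0 = 1. *)
lemma alternating_qbinom_convolution:
  fixes p c :: complex
  assumes p: "norm p < 1"
  shows "(\<Sum>k\<le>2 * K. (-1) ^ k * qbinom p (2 * K) k * poch c p k * poch c p (2 * K - k))
         = poch (c\<^sup>2) (p\<^sup>2) K * poch p (p\<^sup>2) K"
proof -
  define a where "a k = poch c p k / poch p p k" for k
  define h where "h n = (\<Sum>i\<le>n. (-1) ^ i * a i * a (n - i))" for n
  define \<Phi> where "\<Phi> n = (\<Sum>k\<le>n. (-1) ^ k * qbinom p n k * poch c p k * poch c p (n - k))" for n
  have \<Phi>_h: "\<Phi> n = poch p p n * h n" for n
    unfolding \<Phi>_def h_def sum_distrib_left
    by (rule sum.cong) (use poch_nonzero[of p p] p in \<open>auto simp: qbinom_def a_def\<close>)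
  have recurrence: "\<Phi> (Suc (Suc n)) = (1 - p ^ Suc n) * (1 - c\<^sup>2 * p ^ n) * \<Phi> n" for n
    using alternating_convolution_recurrence[OF p, where c = c and n = n]
    by (simp add: \<Phi>_h poch_Suc h_def a_def mult_ac)
  show ?thesis
    unfolding \<Phi>_def[symmetric]
  proof (induction K)
    case (Suc K)
    have "\<Phi> (2 * Suc K) = (1 - p ^ Suc (2 * K)) * (1 - c\<^sup>2 * p ^ (2 * K)) * \<Phi> (2 * K)"
      using recurrence[of "2 * K"] by simp
    also have "\<dots> = poch (c\<^sup>2) (p\<^sup>2) (Suc K) * poch p (p\<^sup>2) (Suc K)"
    proof -
      have "(p\<^sup>2) ^ K = p ^ (2 * K)" by (simp add: power_mult)
      then show ?thesis unfolding poch_Suc Suc.IH by (simp add: mult_ac)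
    qed
    finally show ?case .
  qed (use p in \<open>simp add: \<Phi>_def\<close>)
qed

lemma qpoch_of_nat: "qpoch a p (int n) = poch a p n"
  by (simp add: qpoch_def poch_def)

lemma gauss_binom_of_nat: "gauss_binom p (int n) (int k) = qbinom p n k"
  by (simp add: gauss_binom_def qbinom_def qpoch_of_nat of_nat_diff[symmetric] del: of_nat_diff)

lemma gauss_binom_support: "gauss_binom p N K \<noteq> 0 \<Longrightarrow> 0 \<le> K \<and> K \<le> N"
  by (auto simp: gauss_binom_def split: if_splits)

(* The quotient (q;q^2)_n/(-q;q^2)_n at a negative index -n, where each factor
   1 -+ q^(1-2j) is turned into a factor with a positive power of q. *)
lemma qpoch_negative_ratio:
  fixes q :: complex
  assumes q: "norm q < 1" "q \<noteq> 0"
  shows "qpoch q (q\<^sup>2) (- int n) / qpoch (- q) (q\<^sup>2) (- int n)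
       = (-1) ^ n * (poch (- q) (q\<^sup>2) n / poch q (q\<^sup>2) n)"
proof -
  have factor: "(1 / (1 - q * (q\<^sup>2) powi (- int (Suc m)))) / (1 / (1 - (- q) * (q\<^sup>2) powi (- int (Suc m))))
      = - ((1 - (- q) * (q\<^sup>2) ^ m) / (1 - q * (q\<^sup>2) ^ m))" for m
  proof -
    define r where "r = q * (q\<^sup>2) ^ m"
    have "r \<noteq> 0" using q(2) by (simp add: r_def)
    have "1 - r \<noteq> 0"
      using factor_nonzero[of q "q\<^sup>2" m] q(1) by (simp add: r_def norm_power power_le_one)
    have "(q\<^sup>2) powi (- int (Suc m)) = inverse ((q\<^sup>2) ^ Suc m)"
      by (simp only: power_int_minus power_int_of_nat)
    also have "(q\<^sup>2) ^ Suc m = q * r" by (simp add: r_def power2_eq_square)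
    finally have "q * (q\<^sup>2) powi (- int (Suc m)) = 1 / r"
      using q(2) \<open>r \<noteq> 0\<close> by (simp add: field_simps)
    then have "(1 / (1 - q * (q\<^sup>2) powi (- int (Suc m)))) / (1 / (1 - (- q) * (q\<^sup>2) powi (- int (Suc m))))
        = (1 + 1 / r) / (1 - 1 / r)"
      by simp
    also have "\<dots> = - ((1 + r) / (1 - r))"
      using \<open>r \<noteq> 0\<close> \<open>1 - r \<noteq> 0\<close> by (simp add: field_simps)
    finally show ?thesis by (simp add: r_def)
  qed
  have "qpoch q (q\<^sup>2) (- int n) / qpoch (- q) (q\<^sup>2) (- int n)
      = (\<Prod>j\<in>{1..n}. (1 / (1 - q * (q\<^sup>2) powi (- int j))) / (1 / (1 - (- q) * (q\<^sup>2) powi (- int j))))"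
    by (cases "n = 0") (simp_all add: qpoch_def prod_dividef)
  also have "\<dots> = (\<Prod>m<n. - ((1 - (- q) * (q\<^sup>2) ^ m) / (1 - q * (q\<^sup>2) ^ m)))"
    unfolding One_nat_def prod.atLeast1_atMost_eq factor ..
  also have "\<dots> = (-1) ^ n * (\<Prod>m<n. (1 - (- q) * (q\<^sup>2) ^ m) / (1 - q * (q\<^sup>2) ^ m))"
    by (induction n) simp_all
  also have "\<dots> = (-1) ^ n * (poch (- q) (q\<^sup>2) n / poch q (q\<^sup>2) n)"
    by (simp add: prod_dividef poch_def)
  finally show ?thesis .
qed

(* The left side of the identity after the substitution i = L - k, j = M - l. *)
definition double_sum :: "complex \<Rightarrow> nat \<Rightarrow> nat \<Rightarrow> complex" where
  "double_sum q L M =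
     (\<Sum>k\<le>2 * L. \<Sum>l\<le>2 * M. (-1) ^ (L + k) * q ^ nat ((int L - int k + (int M - int l))\<^sup>2)
        * qbinom (q\<^sup>2) (2 * L) k * qbinom (q\<^sup>2) (2 * M) l)"

lemma minus_one_power_parity:
  assumes "a + b = c + 2 * d"
  shows "(-1 :: complex) ^ a * (-1) ^ b = (-1) ^ c"
  by (metis assms power_add power_mult power_minus1_even mult_1_right)

lemma minus_one_powi_diff: "(-1 :: complex) powi (int a - int b) = (-1) ^ (a + b)"
proof -
  have "(-1 :: complex) powi (int a - int b) = (-1) ^ a / (-1) ^ b"
    by (simp add: power_int_diff)
  also have "\<dots> = (-1) ^ (a + b)"
    by (simp add: power_add minus_one_power_iff)
  finally show ?thesis .
qed

(* The parity of a square is the parity of its root. *)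
lemma minus_power_square:
  fixes q :: complex
  shows "(- q) ^ nat ((int a - int b)\<^sup>2) = (-1) ^ (a + b) * q ^ nat ((int a - int b)\<^sup>2)"
proof -
  have "even (nat ((int a - int b)\<^sup>2)) \<longleftrightarrow> even (int a - int b)"
    by (simp add: even_nat_iff)
  also have "\<dots> \<longleftrightarrow> even (a + b)" by presburger
  finally show ?thesis
    by (simp add: power_minus[of q] minus_one_power_iff)
qed

lemma sum_symmetric_interval:
  "(\<Sum>i\<in>{- int L..int L}. g i) = (\<Sum>k\<le>2 * L. g (int L - int k))"
proof -
  have "bij_betw (\<lambda>k. int L - int k) {..2 * L} {- int L..int L}"
    by (rule bij_betw_byWitness[where f' = "\<lambda>i. nat (int L - i)"]) auto
  from sum.reindex_bij_betw[OF this, of g] show ?thesis by simp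
qed

(* Only the box |i| <= L, |j| <= M contributes to the unordered infinite sum. *)
lemma infsum_eq_double_sum:
  "(\<Sum>\<^sub>\<infinity>(i,j)\<in>(UNIV :: (int \<times> int) set).
      (-1) powi i * q ^ nat ((i + j)\<^sup>2)
      * gauss_binom (q\<^sup>2) (2 * int L) (int L - i)
      * gauss_binom (q\<^sup>2) (2 * int M) (int M - j))
   = double_sum q L M"
  (is "(\<Sum>\<^sub>\<infinity>(i,j)\<in>_. ?E i j) = _")
proof -
  have binom: "gauss_binom (q\<^sup>2) (2 * int N) (int k) = qbinom (q\<^sup>2) (2 * N) k" for N k
    using gauss_binom_of_nat[of _ "2 * N"] by simp
  have "(\<Sum>\<^sub>\<infinity>(i,j)\<in>UNIV. ?E i j) = (\<Sum>\<^sub>\<infinity>(i,j)\<in>{- int L..int L} \<times> {- int M..int M}. ?E i j)"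
    by (rule infsum_cong_neutral) (auto dest!: gauss_binom_support)
  also have "\<dots> = (\<Sum>i\<in>{- int L..int L}. \<Sum>j\<in>{- int M..int M}. ?E i j)"
    by (simp add: sum.cartesian_product)
  also have "\<dots> = double_sum q L M"
    unfolding sum_symmetric_interval double_sum_def
    by (intro sum.cong refl)
       (simp add: minus_one_powi_diff binom)
  finally show ?thesis .
qed

lemma double_sum_swap: "double_sum q L M = double_sum (- q) M L"
proof -
  have "double_sum (- q) M L =
     (\<Sum>k\<le>2 * L. \<Sum>l\<le>2 * M. (-1) ^ (M + l) * (- q) ^ nat ((int M - int l + (int L - int k))\<^sup>2)
        * qbinom (q\<^sup>2) (2 * M) l * qbinom (q\<^sup>2) (2 * L) k)"
    unfolding double_sum_def by (simp add: sum.swap[of _ "{..2 * M}"])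
  also have "\<dots> = double_sum q L M"
    unfolding double_sum_def
  proof (intro sum.cong refl)
    fix k l
    have "int M - int l + (int L - int k) = int (M + L) - int (l + k)"
      "int L - int k + (int M - int l) = int (M + L) - int (l + k)" by simp_all
    then have "(- q) ^ nat ((int M - int l + (int L - int k))\<^sup>2)
        = (-1) ^ (M + L + (l + k)) * q ^ nat ((int L - int k + (int M - int l))\<^sup>2)"
      by (simp only: minus_power_square)
    moreover have "(-1 :: complex) ^ (M + l) * (-1) ^ (M + L + (l + k)) = (-1) ^ (L + k)"
      by (rule minus_one_power_parity[where d = "M + l"]) simp
    ultimately show "(-1) ^ (M + l) * (- q) ^ nat ((int M - int l + (int L - int k))\<^sup>2)
        * qbinom (q\<^sup>2) (2 * M) l * qbinom (q\<^sup>2) (2 * L) k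
      = (-1) ^ (L + k) * q ^ nat ((int L - int k + (int M - int l))\<^sup>2)
        * qbinom (q\<^sup>2) (2 * L) k * qbinom (q\<^sup>2) (2 * M) l"
      by (simp add: mult_ac)
  qed
  finally show ?thesis ..
qed

(* Evaluation for L <= M: the triple product sums over l, the convolution over k. *)
lemma double_sum_eval:
  fixes q :: complex
  assumes q: "norm q < 1" "q \<noteq> 0" and LM: "L \<le> M"
  shows "double_sum q L M
       = (-1) ^ L * (poch (- q) (q\<^sup>2) (M - L) / poch q (q\<^sup>2) (M - L))
         * poch (q\<^sup>2) (q ^ 4) L * poch (q\<^sup>2) (q ^ 4) M"
proof -
  define p n where "p = q\<^sup>2" and "n = M - L"
  define A B where "A = poch (- q) p" and "B = poch q p"
  define c where "c = - q * p ^ n"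
  have p: "norm p < 1" using q(1) by (simp add: p_def norm_power power_less_one_iff)
  have A_split: "A (n + r) = A n * poch c p r" for r by (simp add: A_def c_def poch_add)
  have B_split: "B (n + r) = B n * poch (- c) p r" for r by (simp add: B_def c_def poch_add)
  have "B n \<noteq> 0" unfolding B_def by (rule poch_nonzero) (use q p in auto)
  have inner: "(\<Sum>l\<le>2 * M. qbinom p (2 * M) l * q ^ nat ((int L - int k + (int M - int l))\<^sup>2))
      = (A n)\<^sup>2 * (poch c p k * poch c p (2 * L - k))" if "k \<le> 2 * L" for k
  proof -
    have exponent: "int L - int k + (int M - int l) = int (L + M - k) - int l" for l
      using that LM by simp
    have "L + M - k \<le> 2 * M" using LM by simp
    then have "(\<Sum>l\<le>2 * M. qbinom p (2 * M) l * q ^ nat ((int L - int k + (int M - int l))\<^sup>2))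
        = A (L + M - k) * A (2 * M - (L + M - k))"
      unfolding exponent p_def A_def by (rule finite_jacobi_triple_product[OF q])
    also have "\<dots> = A (n + (2 * L - k)) * A (n + k)"
      using that LM by (simp add: n_def)
    finally show ?thesis by (simp add: A_split power2_eq_square mult_ac)
  qed
  have "double_sum q L M
      = (\<Sum>k\<le>2 * L. (-1) ^ (L + k) * qbinom p (2 * L) k
          * (\<Sum>l\<le>2 * M. qbinom p (2 * M) l * q ^ nat ((int L - int k + (int M - int l))\<^sup>2)))"
    unfolding double_sum_def p_def by (simp add: sum_distrib_left mult_ac)
  also have "\<dots> = (\<Sum>k\<le>2 * L. (-1) ^ (L + k) * qbinom p (2 * L) k
          * ((A n)\<^sup>2 * (poch c p k * poch c p (2 * L - k))))"
    by (rule sum.cong) (simp_all add: inner)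
  also have "\<dots> = (-1) ^ L * (A n)\<^sup>2
      * (\<Sum>k\<le>2 * L. (-1) ^ k * qbinom p (2 * L) k * poch c p k * poch c p (2 * L - k))"
    by (simp add: sum_distrib_left power_add mult_ac)
  also have "\<dots> = (-1) ^ L * (A n)\<^sup>2 * (poch (c\<^sup>2) (p\<^sup>2) L * poch p (p\<^sup>2) L)"
    using alternating_qbinom_convolution[OF p] by simp
  also have "\<dots> = (-1) ^ L * (A n / B n) * poch p (p\<^sup>2) L * (B M * A M)"
  proof -
    have "A M = A n * poch c p L" "B M = B n * poch (- c) p L"
      using A_split[of L] B_split[of L] LM by (simp_all add: n_def)
    then show ?thesis
      unfolding poch_square[of c p L] using \<open>B n \<noteq> 0\<close> by (simp add: power2_eq_square field_simps)
  qed
  also have "B M * A M = poch p (p\<^sup>2) M"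
    using poch_square[of q p M] by (simp add: p_def A_def B_def)
  finally show ?thesis
    by (simp add: p_def A_def B_def n_def power_mult[symmetric])
qed

(* Closed form for all L, M, the case M < L following from the symmetry. *)
lemma double_sum_closed_form:
  fixes q :: complex
  assumes q: "norm q < 1" "q \<noteq> 0"
  shows "double_sum q L M
       = (-1) ^ M * (qpoch q (q\<^sup>2) (int L - int M) / qpoch (- q) (q\<^sup>2) (int L - int M))
         * poch (q\<^sup>2) (q ^ 4) L * poch (q\<^sup>2) (q ^ 4) M"
proof (cases "L \<le> M")
  case True
  define n where "n = M - L"
  have sign: "(-1 :: complex) ^ M * (-1) ^ n = (-1) ^ L"
    by (rule minus_one_power_parity[where d = n]) (use True in \<open>simp add: n_def\<close>)
  have "int L - int M = - int n" using True by (simp add: n_def)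
  have "(-1) ^ M * (qpoch q (q\<^sup>2) (int L - int M) / qpoch (- q) (q\<^sup>2) (int L - int M))
      = (-1) ^ L * (poch (- q) (q\<^sup>2) n / poch q (q\<^sup>2) n)"
    unfolding \<open>int L - int M = - int n\<close> qpoch_negative_ratio[OF q] mult.assoc[symmetric] sign ..
  then show ?thesis
    unfolding double_sum_eval[OF q True] n_def by (simp only:)
next
  case False
  have "double_sum (- q) M L
      = (-1) ^ M * (poch q (q\<^sup>2) (L - M) / poch (- q) (q\<^sup>2) (L - M))
        * poch (q\<^sup>2) (q ^ 4) M * poch (q\<^sup>2) (q ^ 4) L"
    using double_sum_eval[of "- q" M L] q False by simp
  moreover have "int L - int M = int (L - M)" using False by simp
  ultimately show ?thesis
    unfolding double_sum_swap[of q L M] by (simp only: qpoch_of_nat mult_ac)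
qed

theorem mainTheorem2:
  fixes q :: complex and L M :: nat
  assumes "norm q < 1" and "q \<noteq> 0"
  shows "(\<Sum>\<^sub>\<infinity>(i,j)\<in>(UNIV :: (int \<times> int) set).
            (-1) powi i * q ^ nat ((i + j)^2)
            * gauss_binom (q^2) (2 * int L) (int L - i)
            * gauss_binom (q^2) (2 * int M) (int M - j))
       = (-1) ^ M * (qpoch q (q^2) (int L - int M) / qpoch (-q) (q^2) (int L - int M))
         * qpoch (q^2) (q^4) (int L) * qpoch (q^2) (q^4) (int M)"
  unfolding infsum_eq_double_sum double_sum_closed_form[OF assms] qpoch_of_nat ..

end
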